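(* Let $(b,c)$ be a connected graph over a countable set $X$, $G$ a nilpotent group acting cocompactly on $X$ with $H_{b,c}$ $G$-invariant, and $x_0\in X$. Let $R$ be a normal subgroup of $G$ and $Q(R)=\pi^{-1}(Z(G/R))$ with $\pi:G\to G/R$ the projection. Then for every $q\in Q(R)$ which is a commutator in $G$ (i.e. $q=[g,l]$ for some $g,l\in G$) and every harmonic $f\in\mathcal{K}^R$ we have $T_qf=f$.
   Context: A graph over $X$ is $(b,c)$ with $b:X\times X\to[0,\infty)$, $c:X\to\mathbb{R}$, $\sum_yb(x,y)<\infty$ ($b$ need not be symmetric); connected: any two points are joined by a finite sequence $y_1,\dots,y_n$ with $b(y_i,y_{i+1})>0$. $H_{b,c}f(x)=\sum_yb(x,y)(f(x)-f(y))+c(x)f(x)$ on $\mathrm{Dom}(H)=\{f:\sum_yb(x,y)|f(y)|<\infty\ \forall x\}$; harmonic: $Hf=0$; $\mathcal{H}^+$: nonnegative nonzero harmonic functions. $T_gf(x)=f(g^{-1}x)$; cocompact: $GV=X$ for some finite $V$; $H$ is $G$-invariant if $T_g$ preserves $\mathrm{Dom}(H)$ and $HT_g=T_gH$. $\mathcal{K}$ is the closure in $C(X)$ (product topology) of $\{f\in\mathcal{H}^+:f(x_0)=1\}$ and $\mathcal{K}^R=\{f\in\mathcal{K}:T_rf=f\ \forall r\in R\}$. *)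

theory Defs
  imports "HOL-Analysis.Analysis" "HOL-Algebra.Group_Action" "HOL-Algebra.Generated_Groups"
begin

(* The vertex set X is represented by a type 'a (X = UNIV); real functions on X are 'a \<Rightarrow> real,
   carrying the product topology (instance from HOL-Analysis.Function_Topology). *)

definition graph :: "('a \<Rightarrow> 'a \<Rightarrow> real) \<Rightarrow> bool" where
  "graph b \<longleftrightarrow> (\<forall>x y. 0 \<le> b x y) \<and> (\<forall>x. b x summable_on UNIV)"

definition graph_connected :: "('a \<Rightarrow> 'a \<Rightarrow> real) \<Rightarrow> bool" where
  "graph_connected b \<longleftrightarrow> (\<forall>x y. (\<lambda>u v. b u v > 0)\<^sup>*\<^sup>* x y)"

definition dom_H :: "('a \<Rightarrow> 'a \<Rightarrow> real) \<Rightarrow> ('a \<Rightarrow> real) set" where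
  "dom_H b = {f. \<forall>x. (\<lambda>y. b x y * \<bar>f y\<bar>) summable_on UNIV}"

definition H_op :: "('a \<Rightarrow> 'a \<Rightarrow> real) \<Rightarrow> ('a \<Rightarrow> real) \<Rightarrow> ('a \<Rightarrow> real) \<Rightarrow> 'a \<Rightarrow> real" where
  "H_op b c f x = (\<Sum>\<^sub>\<infinity>y. b x y * (f x - f y)) + c x * f x"

definition harmonic :: "('a \<Rightarrow> 'a \<Rightarrow> real) \<Rightarrow> ('a \<Rightarrow> real) \<Rightarrow> ('a \<Rightarrow> real) \<Rightarrow> bool" where
  "harmonic b c f \<longleftrightarrow> f \<in> dom_H b \<and> H_op b c f = (\<lambda>_. 0)"

definition Hplus :: "('a \<Rightarrow> 'a \<Rightarrow> real) \<Rightarrow> ('a \<Rightarrow> real) \<Rightarrow> ('a \<Rightarrow> real) set" where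
  "Hplus b c = {f. harmonic b c f \<and> (\<forall>x. 0 \<le> f x) \<and> f \<noteq> (\<lambda>_. 0)}"

definition Kset :: "('a \<Rightarrow> 'a \<Rightarrow> real) \<Rightarrow> ('a \<Rightarrow> real) \<Rightarrow> 'a \<Rightarrow> ('a \<Rightarrow> real) set" where
  "Kset b c x0 = closure {f \<in> Hplus b c. f x0 = 1}"

definition Tact :: "('g, 'm) monoid_scheme \<Rightarrow> ('g \<Rightarrow> 'a \<Rightarrow> 'a) \<Rightarrow> 'g \<Rightarrow> ('a \<Rightarrow> real) \<Rightarrow> 'a \<Rightarrow> real" where
  "Tact G \<phi> g f = (\<lambda>x. f (\<phi> (inv\<^bsub>G\<^esub> g) x))"

definition KsetR :: "('g, 'm) monoid_scheme \<Rightarrow> ('g \<Rightarrow> 'a \<Rightarrow> 'a) \<Rightarrow> ('a \<Rightarrow> 'a \<Rightarrow> real) \<Rightarrow> ('a \<Rightarrow> real)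
    \<Rightarrow> 'a \<Rightarrow> 'g set \<Rightarrow> ('a \<Rightarrow> real) set" where
  "KsetR G \<phi> b c x0 R = {f \<in> Kset b c x0. \<forall>r\<in>R. Tact G \<phi> r f = f}"

definition cocompact :: "('g, 'm) monoid_scheme \<Rightarrow> ('g \<Rightarrow> 'a \<Rightarrow> 'a) \<Rightarrow> bool" where
  "cocompact G \<phi> \<longleftrightarrow> (\<exists>V. finite V \<and> (\<Union>g\<in>carrier G. \<phi> g ` V) = UNIV)"

definition H_invariant :: "('g, 'm) monoid_scheme \<Rightarrow> ('g \<Rightarrow> 'a \<Rightarrow> 'a) \<Rightarrow> ('a \<Rightarrow> 'a \<Rightarrow> real) \<Rightarrow> ('a \<Rightarrow> real) \<Rightarrow> bool" where
  "H_invariant G \<phi> b c \<longleftrightarrow> (\<forall>g\<in>carrier G. \<forall>f\<in>dom_H b.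
      Tact G \<phi> g f \<in> dom_H b \<and> H_op b c (Tact G \<phi> g f) = Tact G \<phi> g (H_op b c f))"

definition commutator :: "('g, 'm) monoid_scheme \<Rightarrow> 'g \<Rightarrow> 'g \<Rightarrow> 'g" where
  "commutator G g l = g \<otimes>\<^bsub>G\<^esub> l \<otimes>\<^bsub>G\<^esub> inv\<^bsub>G\<^esub> g \<otimes>\<^bsub>G\<^esub> inv\<^bsub>G\<^esub> l"

fun lower_central :: "('g, 'm) monoid_scheme \<Rightarrow> nat \<Rightarrow> 'g set" where
  "lower_central G 0 = carrier G"
| "lower_central G (Suc n) =
     generate G {commutator G h g | h g. h \<in> lower_central G n \<and> g \<in> carrier G}"

definition nilpotent_group :: "('g, 'm) monoid_scheme \<Rightarrow> bool" where
  "nilpotent_group G \<longleftrightarrow> group G \<and> (\<exists>n. lower_central G n = {\<one>\<^bsub>G\<^esub>})"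

definition group_center :: "('g, 'm) monoid_scheme \<Rightarrow> 'g set" where
  "group_center G = {z \<in> carrier G. \<forall>x\<in>carrier G. z \<otimes>\<^bsub>G\<^esub> x = x \<otimes>\<^bsub>G\<^esub> z}"

definition Qset :: "('g, 'm) monoid_scheme \<Rightarrow> 'g set \<Rightarrow> 'g set" where
  "Qset G R = {q \<in> carrier G. R #>\<^bsub>G\<^esub> q \<in> group_center (G Mod R)}"

end

(*
  Let t = [g, l] lie in Q(R) and let f be positive, harmonic and R-invariant. As t is central
  modulo R, f (t u y) = f (u t y); together with cocompactness and the Harnack inequality this
  bounds f (t y) / f y by some finite supremum \<beta>. Suppose \<beta> > 1 and fix 1 < \<gamma> < \<beta>. The defect
  \<beta> f - f (t \<cdot>) is again a nonnegative harmonic function; it is small compared with f at a point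
  where the ratio is nearly \<beta>, and by Harnack it stays small along m further t-steps, so f grows
  by the factor \<gamma> at each of them: f (u t^m v) \<ge> \<gamma>^m f (u v). But [g^n, l^n] = r t^(n^2) with
  r \<in> R is a word of length 4n, along which Harnack only allows growth K^n; for n large this
  contradicts \<gamma>^(n^2). Hence f (t x) \<le> f x, and applying this to t^-1 = [l, g] gives equality.
*)

theory Submission
  imports Defs
begin

section \<open>Nonnegative harmonic functions and the Harnack inequality\<close>

definition nonneg_harmonic :: "('a \<Rightarrow> 'a \<Rightarrow> real) \<Rightarrow> ('a \<Rightarrow> real) \<Rightarrow> ('a \<Rightarrow> real) set" where
  "nonneg_harmonic b c = {F. harmonic b c F \<and> (\<forall>x. 0 \<le> F x)}"

lemma infsum_diff:
  fixes f g :: "'a \<Rightarrow> 'b::{topological_ab_group_add, t2_space}"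
  assumes "f summable_on A" and "g summable_on A"
  shows "infsum (\<lambda>x. f x - g x) A = infsum f A - infsum g A"
proof -
  have "(\<lambda>x. - g x) summable_on A" using assms(2) by (simp add: summable_on_uminus)
  from infsum_add[OF assms(1) this] show ?thesis by (simp add: infsum_uminus)
qed

lemma dom_H_summable:
  assumes "graph b" and "F \<in> dom_H b"
  shows "(\<lambda>y. b x y * F y) summable_on UNIV"
proof (rule abs_summable_summable)
  have "norm (b x y * F y) = b x y * \<bar>F y\<bar>" for y
    using assms(1) by (simp add: graph_def abs_mult)
  then show "(\<lambda>y. norm (b x y * F y)) summable_on UNIV"
    using assms(2) by (simp add: dom_H_def)
qed

lemma H_op_expand:
  assumes "graph b" and "F \<in> dom_H b"
  shows "H_op b c F x = ((\<Sum>\<^sub>\<infinity>y. b x y) + c x) * F x - (\<Sum>\<^sub>\<infinity>y. b x y * F y)"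
proof -
  have "(\<lambda>y. b x y * F x) summable_on UNIV"
    using assms(1) by (intro summable_on_cmult_left) (simp add: graph_def)
  then have "(\<Sum>\<^sub>\<infinity>y. b x y * F x - b x y * F y) = (\<Sum>\<^sub>\<infinity>y. b x y) * F x - (\<Sum>\<^sub>\<infinity>y. b x y * F y)"
    by (simp add: infsum_diff dom_H_summable[OF assms] infsum_cmult_left')
  then show ?thesis
    unfolding H_op_def by (simp add: right_diff_distrib distrib_right)
qed

lemma dom_H_lincomb:
  assumes "graph b" and "F \<in> dom_H b" and "F' \<in> dom_H b"
  shows "(\<lambda>y. a * F y - F' y) \<in> dom_H b"
  unfolding dom_H_def
proof safe
  fix x
  have "(\<lambda>y. \<bar>a\<bar> * (b x y * \<bar>F y\<bar>) + b x y * \<bar>F' y\<bar>) summable_on UNIV"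
    using assms(2,3) by (intro summable_on_add summable_on_cmult_right) (auto simp: dom_H_def)
  then show "(\<lambda>y. b x y * \<bar>a * F y - F' y\<bar>) summable_on UNIV"
  proof (rule summable_on_comparison_test)
    fix y
    have b: "0 \<le> b x y" using assms(1) by (simp add: graph_def)
    have "b x y * \<bar>a * F y - F' y\<bar> \<le> b x y * (\<bar>a\<bar> * \<bar>F y\<bar> + \<bar>F' y\<bar>)"
      by (rule mult_left_mono[OF _ b]) (metis abs_mult abs_triangle_ineq4)
    then show "b x y * \<bar>a * F y - F' y\<bar> \<le> \<bar>a\<bar> * (b x y * \<bar>F y\<bar>) + b x y * \<bar>F' y\<bar>"
      by (simp add: algebra_simps)
    show "0 \<le> b x y * \<bar>a * F y - F' y\<bar>" using b by simp
  qed
qed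

lemma H_op_lincomb:
  assumes "graph b" and "F \<in> dom_H b" and "F' \<in> dom_H b"
  shows "H_op b c (\<lambda>y. a * F y - F' y) x = a * H_op b c F x - H_op b c F' x"
proof -
  have "(\<Sum>\<^sub>\<infinity>y. b x y * (a * F y - F' y)) = (\<Sum>\<^sub>\<infinity>y. a * (b x y * F y) - b x y * F' y)"
    by (simp add: algebra_simps)
  also have "\<dots> = a * (\<Sum>\<^sub>\<infinity>y. b x y * F y) - (\<Sum>\<^sub>\<infinity>y. b x y * F' y)"
    using dom_H_summable[OF assms(1,2)] dom_H_summable[OF assms(1,3)]
    by (simp add: infsum_diff summable_on_cmult_right infsum_cmult_right')
  finally show ?thesis
    unfolding H_op_expand[OF assms(1) dom_H_lincomb[OF assms]] H_op_expand[OF assms(1,2)]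
      H_op_expand[OF assms(1,3)]
    by (simp add: algebra_simps)
qed

lemma harmonic_lincomb:
  assumes "graph b" and "harmonic b c F" and "harmonic b c F'"
  shows "harmonic b c (\<lambda>y. a * F y - F' y)"
  using assms by (simp add: harmonic_def dom_H_lincomb H_op_lincomb fun_eq_iff)

lemma nonneg_harmonic_edge_bound:
  assumes "graph b" and "0 < b x z"
  shows "\<exists>C\<ge>0. \<forall>F\<in>nonneg_harmonic b c. F z \<le> C * F x"
proof -
  define C where "C = max 0 (((\<Sum>\<^sub>\<infinity>y. b x y) + c x) / b x z)"
  have "F z \<le> C * F x" if "F \<in> nonneg_harmonic b c" for F
  proof -
    have dom: "F \<in> dom_H b" and harm: "H_op b c F x = 0" and nonneg: "\<And>y. 0 \<le> F y"
      using that by (auto simp: nonneg_harmonic_def harmonic_def)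
    have "b x z * F z = (\<Sum>\<^sub>\<infinity>y\<in>{z}. b x y * F y)" by simp
    also have "\<dots> \<le> (\<Sum>\<^sub>\<infinity>y. b x y * F y)"
      by (rule infsum_mono_neutral) (use dom_H_summable[OF assms(1) dom] assms(1) nonneg in \<open>auto simp: graph_def\<close>)
    also have "\<dots> = ((\<Sum>\<^sub>\<infinity>y. b x y) + c x) * F x"
      using H_op_expand[OF assms(1) dom, of c x] harm by simp
    finally have "F z \<le> ((\<Sum>\<^sub>\<infinity>y. b x y) + c x) / b x z * F x"
      using assms(2) by (simp add: field_simps)
    also have "\<dots> \<le> C * F x"
      unfolding C_def using nonneg by (intro mult_right_mono) auto
    finally show ?thesis .
  qed
  moreover have "0 \<le> C" by (simp add: C_def)
  ultimately show ?thesis by blast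
qed

lemma harnack_inequality:
  assumes "graph b" and "graph_connected b"
  shows "\<exists>C\<ge>0. \<forall>F\<in>nonneg_harmonic b c. F y \<le> C * F x"
proof -
  have "(\<lambda>u v. 0 < b u v)\<^sup>*\<^sup>* x y" using assms(2) by (simp add: graph_connected_def)
  then show ?thesis
  proof (induction rule: rtranclp_induct)
    case base
    show ?case by (intro exI[of _ 1]) simp
  next
    case (step y z)
    obtain C where "C \<ge> 0" and C: "\<forall>F\<in>nonneg_harmonic b c. F y \<le> C * F x"
      using step.IH by blast
    have "0 < b y z" using step.hyps(2) by simp
    then obtain D where "D \<ge> 0" and D: "\<forall>F\<in>nonneg_harmonic b c. F z \<le> D * F y"
      using nonneg_harmonic_edge_bound[OF assms(1)] by blast
    have "F z \<le> (D * C) * F x" if "F \<in> nonneg_harmonic b c" for F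
    proof -
      have "F z \<le> D * F y" using D that by blast
      also have "\<dots> \<le> D * (C * F x)" using C that \<open>D \<ge> 0\<close> by (intro mult_left_mono) auto
      finally show ?thesis by (simp add: mult.assoc)
    qed
    with \<open>C \<ge> 0\<close> \<open>D \<ge> 0\<close> show ?case by (intro exI[of _ "D * C"]) auto
  qed
qed

lemma harnack_inequality_finite:
  assumes "graph b" and "graph_connected b" and "finite A"
  shows "\<exists>K\<ge>1. \<forall>x\<in>A. \<forall>y\<in>A. \<forall>F\<in>nonneg_harmonic b c. F y \<le> K * F x"
proof -
  have "\<forall>p\<in>A \<times> A. \<exists>C. \<forall>F\<in>nonneg_harmonic b c. F (snd p) \<le> C * F (fst p)"
    using harnack_inequality[OF assms(1,2)] by blast
  then obtain C where C: "\<And>p F. p \<in> A \<times> A \<Longrightarrow> F \<in> nonneg_harmonic b c \<Longrightarrow> F (snd p) \<le> C p * F (fst p)"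
    by metis
  define K where "K = Max (insert 1 (C ` (A \<times> A)))"
  have "F y \<le> K * F x" if "x \<in> A" "y \<in> A" "F \<in> nonneg_harmonic b c" for x y F
  proof -
    have "F y \<le> C (x, y) * F x" using C[of "(x, y)" F] that by simp
    also have "\<dots> \<le> K * F x"
      using that assms(3) by (intro mult_right_mono) (auto simp: K_def nonneg_harmonic_def)
    finally show ?thesis .
  qed
  moreover have "1 \<le> K" using assms(3) by (simp add: K_def)
  ultimately show ?thesis by blast
qed

lemma nonneg_harmonic_pos:
  assumes "graph b" and "graph_connected b" and "F \<in> nonneg_harmonic b c" and "0 < F x0"
  shows "0 < F x"
proof -
  obtain C where "\<forall>F\<in>nonneg_harmonic b c. F x0 \<le> C * F x"
    using harnack_inequality[OF assms(1,2)] by blast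
  then have "F x \<noteq> 0" using assms(3,4) by force
  moreover have "0 \<le> F x" using assms(3) by (simp add: nonneg_harmonic_def)
  ultimately show ?thesis by simp
qed

lemma Kset_normalized_nonneg: "Kset b c x0 \<subseteq> {F. F x0 = 1 \<and> (\<forall>x. 0 \<le> F x)}"
proof -
  have "{F :: 'a \<Rightarrow> real. F x0 = 1 \<and> (\<forall>x. 0 \<le> F x)} = {F. F x0 = 1} \<inter> (\<Inter>x. {F. 0 \<le> F x})"
    by auto
  moreover have "closed \<dots>"
    by (intro closed_Int closed_INT ballI closed_Collect_eq closed_Collect_le
        continuous_on_product_coordinates continuous_on_const)
  ultimately show ?thesis
    unfolding Kset_def by (intro closure_minimal) (auto simp: Hplus_def)
qed

lemma geometric_growth:
  fixes s :: "nat \<Rightarrow> real"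
  assumes "0 \<le> \<gamma>" and "\<And>j. j < m \<Longrightarrow> \<gamma> * s j \<le> s (Suc j)"
  shows "\<gamma> ^ m * s 0 \<le> s m"
  using assms(2)
proof (induction m)
  case (Suc m)
  have "\<gamma> ^ Suc m * s 0 = \<gamma> * (\<gamma> ^ m * s 0)" by simp
  also have "\<dots> \<le> \<gamma> * s m" using Suc assms(1) by (intro mult_left_mono) auto
  also have "\<dots> \<le> s (Suc m)" using Suc.prems by simp
  finally show ?case .
qed simp

section \<open>Commutators and the preimage of the centre\<close>

lemma (in group) commutator_closed [simp]:
  "a \<in> carrier G \<Longrightarrow> b \<in> carrier G \<Longrightarrow> commutator G a b \<in> carrier G"
  by (simp add: commutator_def)

lemma (in group) inv_mult_cancel_right [simp]:
  "x \<in> carrier G \<Longrightarrow> y \<in> carrier G \<Longrightarrow> y \<otimes> inv x \<otimes> x = y"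
  by (simp add: m_assoc)

lemma (in group) mult_inv_cancel_right [simp]:
  "x \<in> carrier G \<Longrightarrow> y \<in> carrier G \<Longrightarrow> y \<otimes> x \<otimes> inv x = y"
  by (simp add: m_assoc)

lemma (in group) inv_commutator:
  "a \<in> carrier G \<Longrightarrow> b \<in> carrier G \<Longrightarrow> inv (commutator G a b) = commutator G b a"
  by (simp add: commutator_def inv_mult_group m_assoc)

lemma (in group_hom) hom_commutator:
  "a \<in> carrier G \<Longrightarrow> b \<in> carrier G \<Longrightarrow> h (commutator G a b) = commutator H (h a) (h b)"
  by (simp add: commutator_def)

lemma (in group) inv_group_center:
  assumes "z \<in> group_center G"
  shows "inv z \<in> group_center G"
proof -
  have z: "z \<in> carrier G" and central: "\<And>x. x \<in> carrier G \<Longrightarrow> z \<otimes> x = x \<otimes> z"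
    using assms by (auto simp: group_center_def)
  have "inv z \<otimes> x = x \<otimes> inv z" if x: "x \<in> carrier G" for x
  proof -
    have "inv z \<otimes> x = inv z \<otimes> (x \<otimes> z) \<otimes> inv z" using z x by (simp add: m_assoc)
    also have "\<dots> = x \<otimes> inv z" using z x central[OF x, symmetric] by (simp add: m_assoc[symmetric])
    finally show ?thesis .
  qed
  then show ?thesis using z by (simp add: group_center_def)
qed

lemma (in group) commutator_pow_central:
  fixes k m :: nat
  assumes a: "a \<in> carrier G" and b: "b \<in> carrier G"
    and central: "commutator G a b \<in> group_center G"
  shows "commutator G (a [^] k) (b [^] m) = commutator G a b [^] (k * m)"
proof -
  define z where "z = commutator G a b"
  have z: "z \<in> carrier G" using a b by (simp add: z_def)
  have z_comm: "z [^] j \<otimes> x = x \<otimes> z [^] j" if "x \<in> carrier G" for j :: nat and x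
    using central that z by (intro group_commutes_pow) (auto simp: z_def group_center_def)
  have conj_b: "a \<otimes> b \<otimes> inv a = z \<otimes> b"
    using a b by (simp add: z_def commutator_def m_assoc)
  have conj_b_pow: "a \<otimes> b [^] j \<otimes> inv a = z [^] j \<otimes> b [^] j" for j :: nat
  proof (induction j)
    case 0
    show ?case using a by simp
  next
    case (Suc j)
    have "a \<otimes> b [^] Suc j \<otimes> inv a = (a \<otimes> b [^] j \<otimes> inv a) \<otimes> (a \<otimes> b \<otimes> inv a)"
      using a b by (simp add: m_assoc[symmetric])
    also have "\<dots> = z [^] j \<otimes> (b [^] j \<otimes> z) \<otimes> b"
      using Suc a b z by (simp add: conj_b m_assoc)
    also have "\<dots> = z [^] j \<otimes> (z \<otimes> b [^] j) \<otimes> b"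
      using z_comm[of "b [^] j" 1] b z by simp
    also have "\<dots> = z [^] Suc j \<otimes> b [^] Suc j"
      using b z by (simp add: m_assoc)
    finally show ?case .
  qed
  have conj_pow: "a [^] i \<otimes> b [^] m \<otimes> inv (a [^] i) = z [^] (i * m) \<otimes> b [^] m" for i :: nat
  proof (induction i)
    case 0
    show ?case using b by simp
  next
    case (Suc i)
    have "a [^] Suc i \<otimes> b [^] m \<otimes> inv (a [^] Suc i)
        = a [^] i \<otimes> (a \<otimes> b [^] m \<otimes> inv a) \<otimes> inv (a [^] i)"
      using a b by (simp add: inv_mult_group m_assoc)
    also have "\<dots> = z [^] m \<otimes> (a [^] i \<otimes> b [^] m \<otimes> inv (a [^] i))"
      using a b z z_comm[of "a [^] i" m, symmetric] by (simp add: conj_b_pow m_assoc[symmetric])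
    also have "\<dots> = z [^] (Suc i * m) \<otimes> b [^] m"
      using Suc b z by (simp add: nat_pow_mult m_assoc[symmetric])
    finally show ?case .
  qed
  show ?thesis
    using conj_pow[of k] a b z by (simp add: commutator_def z_def m_assoc[symmetric])
qed


lemma (in normal) group_hom_rcos: "group_hom G (G Mod H) (\<lambda>a. H #> a)"
  by (intro group_hom.intro group_hom_axioms.intro is_group factorgroup_is_group r_coset_hom_Mod)

lemma (in normal) rcos_eq_imp_mult:
  assumes "x \<in> carrier G" and "H #> x = H #> y"
  shows "\<exists>r\<in>H. x = r \<otimes> y"
proof -
  have "x \<in> H #> y" using assms rcos_self[OF _ is_subgroup] by blast
  then show ?thesis by (auto simp: r_coset_def)
qed

lemma (in normal) Qset_commute:
  assumes "t \<in> Qset G H" and "u \<in> carrier G"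
  shows "\<exists>r\<in>H. t \<otimes> u = r \<otimes> (u \<otimes> t)"
proof -
  have t: "t \<in> carrier G" and central: "H #> t \<in> group_center (G Mod H)"
    using assms(1) by (auto simp: Qset_def)
  have "H #> u \<in> carrier (G Mod H)" using assms(2) by (simp add: FactGroup_def rcosetsI subset)
  then have "(H #> t) <#> (H #> u) = (H #> u) <#> (H #> t)"
    using central by (simp add: group_center_def)
  then have "H #> (t \<otimes> u) = H #> (u \<otimes> t)"
    using t assms(2) by (simp add: rcos_sum)
  then show ?thesis using t assms(2) by (simp add: rcos_eq_imp_mult)
qed

lemma (in normal) Qset_inv:
  assumes "t \<in> Qset G H"
  shows "inv t \<in> Qset G H"
proof -
  interpret Mod: group "G Mod H" by (rule factorgroup_is_group)
  interpret \<pi>: group_hom G "G Mod H" "\<lambda>a. H #> a" by (rule group_hom_rcos)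
  have t: "t \<in> carrier G" and "H #> t \<in> group_center (G Mod H)"
    using assms by (auto simp: Qset_def)
  then have "inv\<^bsub>G Mod H\<^esub> (H #> t) \<in> group_center (G Mod H)"
    by (rule_tac Mod.inv_group_center)
  then show ?thesis using t by (simp add: Qset_def del: inv_FactGroup)
qed

lemma (in normal) commutator_pow_Qset:
  fixes n :: nat
  assumes q: "commutator G g l \<in> Qset G H" and g: "g \<in> carrier G" and l: "l \<in> carrier G"
  shows "\<exists>r\<in>H. commutator G (g [^] n) (l [^] n) = r \<otimes> commutator G g l [^] (n * n)"
proof -
  interpret Mod: group "G Mod H" by (rule factorgroup_is_group)
  interpret \<pi>: group_hom G "G Mod H" "\<lambda>a. H #> a" by (rule group_hom_rcos)
  have central: "commutator (G Mod H) (H #> g) (H #> l) \<in> group_center (G Mod H)"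
    using q g l by (simp add: Qset_def \<pi>.hom_commutator)
  have "H #> commutator G (g [^] n) (l [^] n)
      = commutator (G Mod H) ((H #> g) [^]\<^bsub>G Mod H\<^esub> n) ((H #> l) [^]\<^bsub>G Mod H\<^esub> n)"
    using g l by (simp add: \<pi>.hom_commutator \<pi>.hom_nat_pow)
  also have "\<dots> = commutator (G Mod H) (H #> g) (H #> l) [^]\<^bsub>G Mod H\<^esub> (n * n)"
    using g l central by (simp add: Mod.commutator_pow_central)
  also have "\<dots> = H #> (commutator G g l [^] (n * n))"
    using g l by (simp add: \<pi>.hom_commutator \<pi>.hom_nat_pow)
  finally show ?thesis using g l by (simp add: rcos_eq_imp_mult)
qed


section \<open>Harnack bounds along the group action\<close>

locale harmonic_action = group_action G "UNIV :: 'a set" \<phi>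
  for G :: "('g, 'm) monoid_scheme" (structure) and \<phi> :: "'g \<Rightarrow> 'a \<Rightarrow> 'a" +
  fixes b :: "'a \<Rightarrow> 'a \<Rightarrow> real" and c :: "'a \<Rightarrow> real"
  assumes graph_b: "graph b" and connected_b: "graph_connected b"
    and H_op_invariant: "H_invariant G \<phi> b c"
begin

sublocale group G
  using group_hom group_hom.axioms(1) by blast

lemma act_mult: "u \<in> carrier G \<Longrightarrow> v \<in> carrier G \<Longrightarrow> \<phi> (u \<otimes> v) y = \<phi> u (\<phi> v y)"
  by (simp add: composition_rule)

lemma act_one [simp]: "\<phi> \<one> y = y"
  by (metis id_eq_one UNIV_I restrict_apply')

lemma nonneg_harmonic_translate:
  assumes "F \<in> nonneg_harmonic b c" and "u \<in> carrier G"
  shows "(\<lambda>y. F (\<phi> u y)) \<in> nonneg_harmonic b c"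
proof -
  have harm: "harmonic b c F" and "\<And>y. 0 \<le> F y"
    using assms(1) by (auto simp: nonneg_harmonic_def)
  have T: "Tact G \<phi> (inv u) F = (\<lambda>y. F (\<phi> u y))"
    using assms(2) by (simp add: Tact_def)
  have "Tact G \<phi> (inv u) F \<in> dom_H b"
    and "H_op b c (Tact G \<phi> (inv u) F) = Tact G \<phi> (inv u) (H_op b c F)"
    using H_op_invariant assms(2) harm by (auto simp: H_invariant_def harmonic_def)
  moreover have "H_op b c F = (\<lambda>_. 0)" using harm by (simp add: harmonic_def)
  ultimately have "harmonic b c (Tact G \<phi> (inv u) F)"
    by (simp add: harmonic_def Tact_def)
  with T \<open>\<And>y. 0 \<le> F y\<close> show ?thesis by (simp add: nonneg_harmonic_def)
qed

definition shift_bounded :: "'a set \<Rightarrow> real \<Rightarrow> 'g \<Rightarrow> bool" where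
  "shift_bounded V K a \<longleftrightarrow> (\<forall>w\<in>carrier G. \<forall>v\<in>V. \<forall>F\<in>nonneg_harmonic b c.
     F (\<phi> (w \<otimes> a) v) \<le> K * F (\<phi> w v))"

lemma shift_boundedD:
  "shift_bounded V K a \<Longrightarrow> w \<in> carrier G \<Longrightarrow> v \<in> V \<Longrightarrow> F \<in> nonneg_harmonic b c
    \<Longrightarrow> F (\<phi> (w \<otimes> a) v) \<le> K * F (\<phi> w v)"
  by (simp add: shift_bounded_def)

lemma shift_bounded_one: "shift_bounded V 1 \<one>"
  by (simp add: shift_bounded_def)

lemma shift_bounded_mult:
  assumes "shift_bounded V K a" and "shift_bounded V K' a'" and "0 \<le> K'"
    and "a \<in> carrier G" and "a' \<in> carrier G"
  shows "shift_bounded V (K * K') (a \<otimes> a')"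
  unfolding shift_bounded_def
proof (intro ballI)
  fix w v F assume w: "w \<in> carrier G" and v: "v \<in> V" and F: "F \<in> nonneg_harmonic b c"
  have "F (\<phi> (w \<otimes> (a \<otimes> a')) v) = F (\<phi> ((w \<otimes> a) \<otimes> a') v)"
    using w assms(4,5) by (simp add: m_assoc)
  also have "\<dots> \<le> K' * F (\<phi> (w \<otimes> a) v)"
    using shift_boundedD[OF assms(2) _ v F] w assms(4) by simp
  also have "\<dots> \<le> K' * (K * F (\<phi> w v))"
    using shift_boundedD[OF assms(1) w v F] assms(3) by (rule mult_left_mono)
  finally show "F (\<phi> (w \<otimes> (a \<otimes> a')) v) \<le> K * K' * F (\<phi> w v)"
    by (simp add: mult_ac)
qed

lemma shift_bounded_pow:
  fixes n :: nat
  assumes "shift_bounded V K a" and "0 \<le> K" and "a \<in> carrier G"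
  shows "shift_bounded V (K ^ n) (a [^] n)"
proof (induction n)
  case 0
  show ?case by (simp add: shift_bounded_one)
next
  case (Suc n)
  then show ?case
    using shift_bounded_mult[OF Suc assms(1,2)] assms(3) by (simp add: mult.commute)
qed

lemma harnack_shift_bounded:
  assumes "finite V" and "finite A" and "A \<subseteq> carrier G"
  shows "\<exists>K\<ge>1. \<forall>a\<in>A. shift_bounded V K a"
proof -
  let ?S = "V \<union> (\<Union>a\<in>A. \<phi> a ` V)"
  obtain K where "K \<ge> 1"
    and K: "\<And>x y F. x \<in> ?S \<Longrightarrow> y \<in> ?S \<Longrightarrow> F \<in> nonneg_harmonic b c \<Longrightarrow> F y \<le> K * F x"
    using harnack_inequality_finite[OF graph_b connected_b, of ?S c] assms(1,2) by auto
  have "shift_bounded V K a" if a: "a \<in> A" for a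
    unfolding shift_bounded_def
  proof (intro ballI)
    fix w v F assume w: "w \<in> carrier G" and v: "v \<in> V" and F: "F \<in> nonneg_harmonic b c"
    have "F (\<phi> w (\<phi> a v)) \<le> K * F (\<phi> w v)"
      using K[OF _ _ nonneg_harmonic_translate[OF F w]] a v by blast
    then show "F (\<phi> (w \<otimes> a) v) \<le> K * F (\<phi> w v)"
      using w a assms(3) by (auto simp: act_mult)
  qed
  with \<open>K \<ge> 1\<close> show ?thesis by blast
qed

lemma harnack_commutator_pow:
  assumes "finite V" and g: "g \<in> carrier G" and l: "l \<in> carrier G"
  shows "\<exists>K\<ge>1. \<forall>n::nat. \<forall>v\<in>V. \<forall>F\<in>nonneg_harmonic b c.
           F (\<phi> (commutator G (g [^] n) (l [^] n)) v) \<le> K ^ n * F v"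
proof -
  obtain K where K1: "K \<ge> 1" and K: "\<And>a. a \<in> {g, l, inv g, inv l} \<Longrightarrow> shift_bounded V K a"
    using harnack_shift_bounded[OF assms(1), of "{g, l, inv g, inv l}"] g l by auto
  have pow: "shift_bounded V (K ^ n) (a [^] n)" if "a \<in> {g, l, inv g, inv l}" for a and n :: nat
    using shift_bounded_pow[OF K[OF that]] K1 that g l by auto
  have "shift_bounded V (K ^ n * K ^ n * K ^ n * K ^ n)
          (g [^] n \<otimes> l [^] n \<otimes> inv g [^] n \<otimes> inv l [^] n)" for n :: nat
    using K1 g l by (intro shift_bounded_mult pow) auto
  moreover have "g [^] n \<otimes> l [^] n \<otimes> inv g [^] n \<otimes> inv l [^] n = commutator G (g [^] n) (l [^] n)"
    for n :: nat
    using g l by (simp add: commutator_def nat_pow_inv)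
  ultimately have comm: "shift_bounded V ((K ^ 4) ^ n) (commutator G (g [^] n) (l [^] n))"
    for n :: nat
    by (simp add: power4_eq_xxxx power_mult_distrib)
  have "F (\<phi> (commutator G (g [^] n) (l [^] n)) v) \<le> (K ^ 4) ^ n * F v"
    if "v \<in> V" and "F \<in> nonneg_harmonic b c" for n :: nat and v F
    using shift_boundedD[OF comm one_closed that] g l by simp
  with K1 show ?thesis
    by (intro exI[of _ "K ^ 4"]) auto
qed

lemma nonneg_harmonic_defect:
  assumes "F \<in> nonneg_harmonic b c" and "t \<in> carrier G" and "\<And>y. F (\<phi> t y) \<le> \<beta> * F y"
  shows "(\<lambda>y. \<beta> * F y - F (\<phi> t y)) \<in> nonneg_harmonic b c"
proof -
  have "harmonic b c (\<lambda>y. F (\<phi> t y))"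
    using nonneg_harmonic_translate[OF assms(1,2)] by (simp add: nonneg_harmonic_def)
  then have "harmonic b c (\<lambda>y. \<beta> * F y - F (\<phi> t y))"
    using assms(1) by (intro harmonic_lincomb graph_b) (auto simp: nonneg_harmonic_def)
  with assms(3) show ?thesis by (simp add: nonneg_harmonic_def)
qed

end

locale normal_harmonic_action = harmonic_action G \<phi> b c
  for G :: "('g, 'm) monoid_scheme" (structure) and \<phi> :: "'g \<Rightarrow> 'a \<Rightarrow> 'a" and b c +
  fixes R :: "'g set"
  assumes R_normal: "R \<lhd> G"
begin

definition R_invariant :: "('a \<Rightarrow> real) \<Rightarrow> bool" where
  "R_invariant F \<longleftrightarrow> (\<forall>r\<in>R. \<forall>y. F (\<phi> r y) = F y)"

lemma R_subset: "R \<subseteq> carrier G"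
  using R_normal normal_imp_subgroup subgroup.subset by blast

lemma R_invariant_if_Tact_fixed:
  assumes "\<forall>r\<in>R. Tact G \<phi> r F = F"
  shows "R_invariant F"
  unfolding R_invariant_def
proof (intro ballI allI)
  fix r y assume r: "r \<in> R"
  then have "Tact G \<phi> (inv r) F y = F y"
    using assms subgroup.m_inv_closed[OF normal_imp_subgroup[OF R_normal]] by metis
  then show "F (\<phi> r y) = F y"
    using r R_subset by (auto simp: Tact_def)
qed

lemma R_invariant_translate:
  assumes "R_invariant F" and u: "u \<in> carrier G"
  shows "R_invariant (\<lambda>y. F (\<phi> u y))"
  unfolding R_invariant_def
proof (intro ballI allI)
  fix r y assume r: "r \<in> R"
  have r': "u \<otimes> r \<otimes> inv u \<in> R" using normal.inv_op_closed2[OF R_normal u r] .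
  have "F (\<phi> u (\<phi> r y)) = F (\<phi> (u \<otimes> r \<otimes> inv u) (\<phi> u y))"
    using u r r' R_subset by (auto simp: act_mult[symmetric] m_assoc)
  also have "\<dots> = F (\<phi> u y)"
    using assms(1) r' by (simp add: R_invariant_def)
  finally show "F (\<phi> u (\<phi> r y)) = F (\<phi> u y)" .
qed

lemma Qset_swap:
  assumes "R_invariant F" and "t \<in> Qset G R" and "u \<in> carrier G"
  shows "F (\<phi> t (\<phi> u y)) = F (\<phi> u (\<phi> t y))"
proof -
  obtain r where r: "r \<in> R" and tu: "t \<otimes> u = r \<otimes> (u \<otimes> t)"
    using normal.Qset_commute[OF R_normal assms(2,3)] by blast
  have t: "t \<in> carrier G" using assms(2) by (simp add: Qset_def)
  have "F (\<phi> t (\<phi> u y)) = F (\<phi> r (\<phi> u (\<phi> t y)))"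
    using t r R_subset assms(3) tu by (auto simp: act_mult[symmetric])
  also have "\<dots> = F (\<phi> u (\<phi> t y))"
    using assms(1) r by (simp add: R_invariant_def)
  finally show ?thesis .
qed

lemma Qset_shift_ratio_bounded:
  assumes "cocompact G \<phi>" and "F \<in> nonneg_harmonic b c" and "R_invariant F" and "t \<in> Qset G R"
  shows "\<exists>C. \<forall>y. F (\<phi> t y) \<le> C * F y"
proof -
  obtain V where "finite V" and cover: "(\<Union>u\<in>carrier G. \<phi> u ` V) = UNIV"
    using assms(1) by (auto simp: cocompact_def)
  have t: "t \<in> carrier G" using assms(4) by (simp add: Qset_def)
  then obtain C where "shift_bounded V C t"
    using harnack_shift_bounded[OF \<open>finite V\<close>, of "{t}"] by auto
  have "F (\<phi> t y) \<le> C * F y" for y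
  proof -
    obtain u v where u: "u \<in> carrier G" and v: "v \<in> V" and y: "y = \<phi> u v"
      using cover by blast
    have "F (\<phi> t y) = F (\<phi> (u \<otimes> t) v)"
      using Qset_swap[OF assms(3,4) u] t u y by (simp add: act_mult)
    also have "\<dots> \<le> C * F y"
      using \<open>shift_bounded V C t\<close> u v y assms(2) by (simp add: shift_bounded_def)
    finally show ?thesis .
  qed
  then show ?thesis by blast
qed

lemma Qset_near_extremal_growth:
  fixes m :: nat
  assumes F: "F \<in> nonneg_harmonic b c" and "R_invariant F" and t: "t \<in> Qset G R"
    and \<beta>: "\<And>y. F (\<phi> t y) \<le> \<beta> * F y" and "0 \<le> \<gamma>" and "\<gamma> < \<beta>" and "finite V"
  obtains \<epsilon> where "\<epsilon> > 0" and "\<And>u v. u \<in> carrier G \<Longrightarrow> v \<in> V \<Longrightarrow>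
      (\<beta> - \<epsilon>) * F (\<phi> u v) \<le> F (\<phi> t (\<phi> u v)) \<Longrightarrow>
      \<gamma> ^ m * F (\<phi> u v) \<le> F (\<phi> u (\<phi> (t [^] m) v))"
proof -
  have tG: "t \<in> carrier G" using t by (simp add: Qset_def)
  define A where "A = (\<lambda>j. t [^] j) ` {..<m} \<union> (\<lambda>j. inv (t [^] j)) ` {..<m}"
  have "finite A" and "A \<subseteq> carrier G" using tG by (auto simp: A_def)
  obtain M where "M \<ge> 1" and M: "\<forall>a\<in>A. shift_bounded V M a"
    using harnack_shift_bounded[OF \<open>finite V\<close> \<open>finite A\<close> \<open>A \<subseteq> carrier G\<close>] by blast
  define \<epsilon> where "\<epsilon> = (\<beta> - \<gamma>) / (M * M)"
  define h where "h y = \<beta> * F y - F (\<phi> t y)" for y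
  have h: "h \<in> nonneg_harmonic b c"
    using nonneg_harmonic_defect[OF F tG \<beta>] by (simp add: h_def[abs_def])
  have "\<gamma> ^ m * F (\<phi> u v) \<le> F (\<phi> u (\<phi> (t [^] m) v))"
    if u: "u \<in> carrier G" and v: "v \<in> V" and near: "(\<beta> - \<epsilon>) * F (\<phi> u v) \<le> F (\<phi> t (\<phi> u v))" for u v
  proof -
    let ?s = "\<lambda>j. F (\<phi> u (\<phi> (t [^] j) v))"
    have "\<gamma> * ?s j \<le> ?s (Suc j)" if j: "j < m" for j
    proof -
      have tj: "t [^] j \<in> A" and tj_inv: "inv (t [^] j) \<in> A" using j by (auto simp: A_def)
      have utj: "u \<otimes> t [^] j \<in> carrier G" using u tG by simp
      have "F (\<phi> u v) = F (\<phi> ((u \<otimes> t [^] j) \<otimes> inv (t [^] j)) v)"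
        using u tG by simp
      also have "\<dots> \<le> M * ?s j"
        using shift_boundedD[OF bspec[OF M tj_inv] utj v F] u tG by (simp add: act_mult)
      finally have F_uv: "F (\<phi> u v) \<le> M * ?s j" .
      have "h (\<phi> u (\<phi> (t [^] j) v)) \<le> M * h (\<phi> u v)"
        using shift_boundedD[OF bspec[OF M tj] u v h] u tG by (simp add: act_mult)
      also have "\<dots> \<le> M * (\<epsilon> * F (\<phi> u v))"
        using near \<open>M \<ge> 1\<close> by (intro mult_left_mono) (auto simp: h_def algebra_simps)
      also have "\<dots> \<le> M * (\<epsilon> * (M * ?s j))"
        using F_uv \<open>M \<ge> 1\<close> \<open>\<gamma> < \<beta>\<close> by (intro mult_left_mono) (auto simp: \<epsilon>_def)
      also have "\<dots> = (\<beta> - \<gamma>) * ?s j"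
        using \<open>M \<ge> 1\<close> by (simp add: \<epsilon>_def field_simps)
      finally have "h (\<phi> u (\<phi> (t [^] j) v)) \<le> (\<beta> - \<gamma>) * ?s j" .
      moreover have "?s (Suc j) = F (\<phi> t (\<phi> u (\<phi> (t [^] j) v)))"
        unfolding nat_pow_Suc2[OF tG] using Qset_swap[OF \<open>R_invariant F\<close> t u] tG
        by (simp add: act_mult)
      ultimately show ?thesis by (simp add: h_def algebra_simps)
    qed
    from geometric_growth[of \<gamma> m ?s, OF \<open>0 \<le> \<gamma>\<close> this] show ?thesis by simp
  qed
  moreover have "\<epsilon> > 0" using \<open>\<gamma> < \<beta>\<close> \<open>M \<ge> 1\<close> by (simp add: \<epsilon>_def)
  ultimately show ?thesis using that by blast
qed


lemma Qset_shift_ratio_sup: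
  assumes "cocompact G \<phi>" and "F \<in> nonneg_harmonic b c" and pos: "\<And>x. 0 < F x"
    and "R_invariant F" and "t \<in> Qset G R"
  obtains \<beta> where "\<And>y. F (\<phi> t y) \<le> \<beta> * F y"
    and "\<And>\<epsilon>. \<epsilon> > 0 \<Longrightarrow> \<exists>y. (\<beta> - \<epsilon>) * F y < F (\<phi> t y)"
proof -
  obtain C where C: "\<And>y. F (\<phi> t y) \<le> C * F y"
    using Qset_shift_ratio_bounded[OF assms(1,2,4,5)] by blast
  define \<rho> where "\<rho> y = F (\<phi> t y) / F y" for y
  have bdd: "bdd_above (range \<rho>)"
    using C pos by (intro bdd_aboveI[of _ C]) (auto simp: \<rho>_def divide_le_eq)
  have "F (\<phi> t y) \<le> (SUP y. \<rho> y) * F y" for y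
    using cSUP_upper[OF UNIV_I bdd, of y] pos[of y] by (simp add: \<rho>_def divide_le_eq)
  moreover have "\<exists>y. ((SUP y. \<rho> y) - \<epsilon>) * F y < F (\<phi> t y)" if "\<epsilon> > 0" for \<epsilon>
  proof -
    obtain y where "(SUP y. \<rho> y) - \<epsilon> < \<rho> y"
      using less_cSUP_iff[OF _ bdd, of "(SUP y. \<rho> y) - \<epsilon>"] \<open>\<epsilon> > 0\<close> by auto
    then show ?thesis using pos[of y] by (auto simp: \<rho>_def less_divide_eq)
  qed
  ultimately show ?thesis using that by blast
qed

lemma Qset_commutator_pow_bound:
  assumes "finite V" and F: "F \<in> nonneg_harmonic b c" and R_inv: "R_invariant F"
    and t: "t \<in> Qset G R" and g: "g \<in> carrier G" and l: "l \<in> carrier G"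
    and t_comm: "t = commutator G g l"
  obtains K where "K \<ge> 1" and "\<And>n u v. u \<in> carrier G \<Longrightarrow> v \<in> V \<Longrightarrow>
      F (\<phi> u (\<phi> (t [^] (n * n)) v)) \<le> K ^ n * F (\<phi> u v)"
proof -
  obtain K where "K \<ge> 1" and K: "\<And>n v H. v \<in> V \<Longrightarrow> H \<in> nonneg_harmonic b c \<Longrightarrow>
      H (\<phi> (commutator G (g [^] n) (l [^] n)) v) \<le> K ^ n * H v"
    using harnack_commutator_pow[OF assms(1) g l] by blast
  have "F (\<phi> u (\<phi> (t [^] (n * n)) v)) \<le> K ^ n * F (\<phi> u v)"
    if u: "u \<in> carrier G" and v: "v \<in> V" for n u v
  proof -
    obtain r where r: "r \<in> R" and r_comm: "commutator G (g [^] n) (l [^] n) = r \<otimes> t [^] (n * n)"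
      using normal.commutator_pow_Qset[OF R_normal _ g l, of n] t t_comm by auto
    have "F (\<phi> u (\<phi> (t [^] (n * n)) v)) = F (\<phi> u (\<phi> (commutator G (g [^] n) (l [^] n)) v))"
      using R_invariant_translate[OF R_inv u] r r_comm R_subset t
      by (auto simp: R_invariant_def act_mult Qset_def)
    also have "\<dots> \<le> K ^ n * F (\<phi> u v)"
      using K[OF v nonneg_harmonic_translate[OF F u]] .
    finally show ?thesis .
  qed
  with \<open>K \<ge> 1\<close> show ?thesis using that by blast
qed

lemma Qset_commutator_nonexpanding:
  assumes cocompact: "cocompact G \<phi>" and F: "F \<in> nonneg_harmonic b c" and pos: "\<And>x. 0 < F x"
    and R_inv: "R_invariant F" and t: "t \<in> Qset G R"
    and g: "g \<in> carrier G" and l: "l \<in> carrier G" and t_comm: "t = commutator G g l"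
  shows "F (\<phi> t x) \<le> F x"
proof (rule ccontr)
  assume expanding: "\<not> F (\<phi> t x) \<le> F x"
  obtain V where "finite V" and cover: "(\<Union>u\<in>carrier G. \<phi> u ` V) = UNIV"
    using cocompact by (auto simp: cocompact_def)
  obtain \<beta> where \<beta>: "\<And>y. F (\<phi> t y) \<le> \<beta> * F y"
    and sup: "\<And>\<epsilon>. \<epsilon> > 0 \<Longrightarrow> \<exists>y. (\<beta> - \<epsilon>) * F y < F (\<phi> t y)"
    using Qset_shift_ratio_sup[OF cocompact F pos R_inv t] by blast
  have "1 < \<beta>"
    using expanding \<beta>[of x] pos[of x] by (smt (verit) mult_le_cancel_right2)
  define \<gamma> where "\<gamma> = (1 + \<beta>) / 2"
  have "0 \<le> \<gamma>" and "\<gamma> < \<beta>" and "1 < \<gamma>" using \<open>1 < \<beta>\<close> by (auto simp: \<gamma>_def)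
  obtain K where "K \<ge> 1" and K: "\<And>n u v. u \<in> carrier G \<Longrightarrow> v \<in> V \<Longrightarrow>
      F (\<phi> u (\<phi> (t [^] (n * n)) v)) \<le> K ^ n * F (\<phi> u v)"
    using Qset_commutator_pow_bound[OF \<open>finite V\<close> F R_inv t g l t_comm] by blast
  obtain n :: nat where "K < \<gamma> ^ n" using real_arch_pow[OF \<open>1 < \<gamma>\<close>] by blast
  with \<open>K \<ge> 1\<close> have "n > 0" by (cases n) auto
  obtain \<epsilon> where "\<epsilon> > 0" and growth: "\<And>u v. u \<in> carrier G \<Longrightarrow> v \<in> V \<Longrightarrow>
      (\<beta> - \<epsilon>) * F (\<phi> u v) \<le> F (\<phi> t (\<phi> u v)) \<Longrightarrow>
      \<gamma> ^ (n * n) * F (\<phi> u v) \<le> F (\<phi> u (\<phi> (t [^] (n * n)) v))"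
    using Qset_near_extremal_growth[OF F R_inv t \<beta> \<open>0 \<le> \<gamma>\<close> \<open>\<gamma> < \<beta>\<close> \<open>finite V\<close>] by blast
  obtain y where "(\<beta> - \<epsilon>) * F y < F (\<phi> t y)" using sup[OF \<open>\<epsilon> > 0\<close>] by blast
  moreover obtain u v where u: "u \<in> carrier G" and v: "v \<in> V" and "y = \<phi> u v"
    using cover by blast
  ultimately have "\<gamma> ^ (n * n) * F (\<phi> u v) \<le> F (\<phi> u (\<phi> (t [^] (n * n)) v))"
    using growth[OF u v] by simp
  also have "\<dots> \<le> K ^ n * F (\<phi> u v)" using K[OF u v] .
  also have "\<dots> < \<gamma> ^ (n * n) * F (\<phi> u v)"
  proof -
    have "K ^ n < (\<gamma> ^ n) ^ n"
      using \<open>K < \<gamma> ^ n\<close> \<open>K \<ge> 1\<close> \<open>n > 0\<close> by (intro power_strict_mono) auto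
    then show ?thesis using pos by (simp add: power_mult)
  qed
  finally show False by simp
qed

lemma Qset_commutator_invariant:
  assumes "cocompact G \<phi>" and "F \<in> nonneg_harmonic b c" and "\<And>x. 0 < F x"
    and "R_invariant F" and t: "t \<in> Qset G R"
    and g: "g \<in> carrier G" and l: "l \<in> carrier G" and t_comm: "t = commutator G g l"
  shows "F (\<phi> t x) = F x"
proof (rule antisym)
  show "F (\<phi> t x) \<le> F x" by (rule Qset_commutator_nonexpanding[OF assms])
  have "inv t \<in> Qset G R" and "inv t = commutator G l g"
    using normal.Qset_inv[OF R_normal t] inv_commutator g l t_comm by auto
  then have "F (\<phi> (inv t) (\<phi> t x)) \<le> F (\<phi> t x)"
    using Qset_commutator_nonexpanding[OF assms(1-4) _ l g] by blast
  then show "F x \<le> F (\<phi> t x)"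
    using t by (simp add: Qset_def act_mult[symmetric])
qed

end

theorem lemma6:
  fixes G :: "('g, 'm) monoid_scheme" and \<phi> :: "'g \<Rightarrow> 'a \<Rightarrow> 'a"
    and b :: "'a \<Rightarrow> 'a \<Rightarrow> real" and c :: "'a \<Rightarrow> real" and x0 :: 'a and R :: "'g set"
  assumes "countable (UNIV :: 'a set)"
    and "graph b" and "graph_connected b"
    and "nilpotent_group G"
    and "group_action G UNIV \<phi>"
    and "cocompact G \<phi>"
    and "H_invariant G \<phi> b c"
    and "R \<lhd> G"
    and "q \<in> Qset G R"
    and "\<exists>g\<in>carrier G. \<exists>l\<in>carrier G. q = commutator G g l"
    and "f \<in> KsetR G \<phi> b c x0 R"
    and "harmonic b c f"
  shows "Tact G \<phi> q f = f"
proof -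
  interpret normal_harmonic_action G \<phi> b c R
    using assms(2,3,5,7,8)
    by (simp add: normal_harmonic_action_def normal_harmonic_action_axioms_def
        harmonic_action_def harmonic_action_axioms_def)
  have "f \<in> Kset b c x0" using assms(11) by (simp add: KsetR_def)
  then have "f x0 = 1 \<and> (\<forall>x. 0 \<le> f x)"
    using Kset_normalized_nonneg[of b c x0] by blast
  then have f: "f \<in> nonneg_harmonic b c" and "f x0 = 1"
    using assms(12) by (auto simp: nonneg_harmonic_def)
  then have pos: "0 < f x" for x
    using nonneg_harmonic_pos[OF assms(2,3) f, of x0] by simp
  have R_inv: "R_invariant f"
    using assms(11) by (intro R_invariant_if_Tact_fixed) (simp add: KsetR_def)
  obtain g l where g: "g \<in> carrier G" and l: "l \<in> carrier G" and q: "q = commutator G g l"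
    using assms(10) by blast
  have "inv\<^bsub>G\<^esub> q \<in> Qset G R" and "inv\<^bsub>G\<^esub> q = commutator G l g"
    using normal.Qset_inv[OF assms(8) assms(9)] inv_commutator g l q by auto
  then have "f (\<phi> (inv\<^bsub>G\<^esub> q) x) = f x" for x
    using Qset_commutator_invariant[OF assms(6) f pos R_inv _ l g] by blast
  then show ?thesis by (simp add: Tact_def fun_eq_iff)
qed

end
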